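(* Let $(Q(M))_{M\in\mathcal N}$ be a family of matrices satisfying (A1)–(A3), and let $p$ be a stochastic choice function such that $p(\cdot,\{i,j\})\bigl(I-Q(\{i,j\})\bigr)=0$ for all distinct $i,j\in X$. Then for a menu $M\in\mathcal N$ we have $p(\cdot,M)\bigl(I-Q(M)\bigr)=0$ if and only if for every $j\in M$ $$\sum_{\substack{i\in M\setminus\{j\}:\\ q_{ji}(M)>0}}\frac{\delta_{ji}(M)\,q_{ji}(M)}{p(i,\{i,j\})}\;-\sum_{\substack{i\in M\setminus\{j\}:\\ q_{ji}(M)=0,\ q_{ji}(\{i,j\})=0}}\frac{\delta_{ij}(M)\,q_{ij}(M)}{p(j,\{i,j\})}=0$$ (all denominators appearing here are strictly positive).
   Context: $X$ is a finite set of alternatives; a menu is a nonempty subset of $X$, and $\mathcal N$ denotes the set of all menus. A stochastic choice function is a map $p:X\times\mathcal N\to[0,1]$ with $\sum_{i\in M}p(i,M)=1$ and $p(i,M)=0$ for $i\notin M$; $p(\cdot,M)$ denotes the row vector $(p(i,M))_{i\in M}$. For $M\in\mathcal N$ and $i,j\in M$ let $\delta_{ij}(M)=p(i,M)\,p(j,\{i,j\})-p(i,\{i,j\})\,p(j,M)$. The family $Q(M)=(q_{ij}(M))_{i,j\in M}$, $M\in\mathcal N$, has nonnegative entries and satisfies for all $M\in\mathcal N$ and distinct $i,j\in M$: (A1) $q_{ii}(M)=1-\sum_{k\neq i}q_{ik}(M)>0$; (A2) if $q_{ij}(\{i,j\})=0$ then $q_{ji}(\{i,j\})>0$; (A3)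 $q_{ij}(\{i,j\})\,q_{ji}(M)=q_{ji}(\{i,j\})\,q_{ij}(M)$. *)

theory Defs
  imports Complex_Main
begin

text \<open>A stochastic choice function is p :: 'a => 'a set => real, where p i M
is the probability of choosing i from menu M. The matrix family is
Q :: 'a set => 'a => 'a => real with Q M i j = q_ij(M).\<close>

definition menu :: "'a set \<Rightarrow> 'a set \<Rightarrow> bool" where
  "menu X M \<longleftrightarrow> M \<subseteq> X \<and> M \<noteq> {}"

definition stoch_choice :: "'a set \<Rightarrow> ('a \<Rightarrow> 'a set \<Rightarrow> real) \<Rightarrow> bool" where
  "stoch_choice X p \<longleftrightarrow>
     (\<forall>M. menu X M \<longrightarrow>
        (\<forall>i\<in>X. 0 \<le> p i M \<and> p i M \<le> 1) \<and>
        (\<Sum>i\<in>M. p i M) = 1 \<and>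
        (\<forall>i\<in>X. i \<notin> M \<longrightarrow> p i M = 0))"

definition Q_family :: "'a set \<Rightarrow> ('a set \<Rightarrow> 'a \<Rightarrow> 'a \<Rightarrow> real) \<Rightarrow> bool" where
  "Q_family X Q \<longleftrightarrow>
     (\<forall>M. menu X M \<longrightarrow>
        (\<forall>i\<in>M. \<forall>j\<in>M. 0 \<le> Q M i j) \<and>
        (\<forall>i\<in>M. Q M i i = 1 - (\<Sum>k\<in>M - {i}. Q M i k) \<and> Q M i i > 0) \<and>
        (\<forall>i\<in>M. \<forall>j\<in>M. i \<noteq> j \<longrightarrow>
            (Q {i,j} i j = 0 \<longrightarrow> Q {i,j} j i > 0) \<and>
            Q {i,j} i j * Q M j i = Q {i,j} j i * Q M i j))"

definition stationary :: "('a \<Rightarrow> 'a set \<Rightarrow> real) \<Rightarrow> ('a set \<Rightarrow> 'a \<Rightarrow> 'a \<Rightarrow> real) \<Rightarrow> 'a set \<Rightarrow> bool" where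
  "stationary p Q M \<longleftrightarrow>
     (\<forall>j\<in>M. (\<Sum>i\<in>M. p i M * ((if i = j then 1 else 0) - Q M i j)) = 0)"

definition delta :: "('a \<Rightarrow> 'a set \<Rightarrow> real) \<Rightarrow> 'a set \<Rightarrow> 'a \<Rightarrow> 'a \<Rightarrow> real" where
  "delta p M i j = p i M * p j {i,j} - p i {i,j} * p j M"

end

theory Submission
  imports Defs
begin

text \<open>Stationarity of p(.,M) says that for each j the probability flow out of j,
  \<open>\<Sum>\<^sub>i p(j,M) q\<^sub>j\<^sub>i(M)\<close>, equals the flow into j, \<open>\<Sum>\<^sub>i p(i,M) q\<^sub>i\<^sub>j(M)\<close>.
  Stationarity on the pair {i,j} is the detailed balance
  \<open>p(i,{i,j}) q\<^sub>i\<^sub>j({i,j}) = p(j,{i,j}) q\<^sub>j\<^sub>i({i,j})\<close>, and combined with (A3) it lets one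
  rewrite each net flow \<open>p(j,M) q\<^sub>j\<^sub>i(M) - p(i,M) q\<^sub>i\<^sub>j(M)\<close> as a multiple of
  \<open>\<delta>\<^sub>j\<^sub>i(M)\<close>: divided by \<open>p(i,{i,j})\<close> when \<open>q\<^sub>j\<^sub>i(M) > 0\<close>, by \<open>p(j,{i,j})\<close> when
  \<open>q\<^sub>j\<^sub>i(M) = q\<^sub>j\<^sub>i({i,j}) = 0\<close>, and the term vanishes in the remaining case.\<close>

context
  fixes ui uj aij aji qij qji :: real
  assumes pair_sum: "ui + uj = 1"
    and pair_balance: "ui * aij = uj * aji"
    and nonneg: "0 \<le> ui" "0 \<le> uj" "0 \<le> aij" "0 \<le> aji" "0 \<le> qji"
    and pair_irreducible: "aij = 0 \<longrightarrow> aji > 0"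
    and menu_balance: "aij * qji = aji * qij"
begin

text \<open>Here ui, uj are p(i,{i,j}), p(j,{i,j}); aij, aji are the entries of Q({i,j});
  qij, qji those of Q(M).\<close>

lemma pair_prob_pos_if_menu_pos:
  assumes "qji > 0"
  shows "ui > 0"
proof (rule ccontr)
  assume "\<not> ui > 0"
  then have "ui = 0" "uj = 1" using nonneg pair_sum by auto
  then have "aji = 0" using pair_balance by simp
  then have "aij > 0" using pair_irreducible nonneg by auto
  then show False using menu_balance \<open>aji = 0\<close> assms by simp
qed

lemma pair_prob_pos_if_absent:
  assumes "qji = 0" "aji = 0"
  shows "uj > 0"
proof (rule ccontr)
  assume "\<not> uj > 0"
  then have "uj = 0" "ui = 1" using nonneg pair_sum by auto
  then have "aij = 0" using pair_balance by simp
  then show False using pair_irreducible assms by simp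
qed

lemma net_flow_eq_delta_terms:
  "mj * qji - mi * qij =
     (if qji > 0 then (mj * ui - mi * uj) * qji / ui else 0)
   - (if qji = 0 \<and> aji = 0 then (mi * uj - mj * ui) * qij / uj else 0)"
proof -
  consider "qji > 0" | "qji = 0" "aji = 0" | "qji = 0" "aji > 0"
    using nonneg by linarith
  then show ?thesis
  proof cases
    case 1
    have "ui > 0" using pair_prob_pos_if_menu_pos 1 .
    have "aji > 0"
    proof (rule ccontr)
      assume "\<not> aji > 0"
      then have "aji = 0" using nonneg by simp
      then have "aij = 0" using pair_balance \<open>ui > 0\<close> by simp
      then show False using pair_irreducible \<open>aji = 0\<close> by simp
    qed
    have "ui * qij = uj * qji"
    proof -
      have "aji * (ui * qij) = ui * aij * qji" using menu_balance by (simp add: algebra_simps)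
      also have "\<dots> = aji * (uj * qji)" using pair_balance by (simp add: algebra_simps)
      finally show ?thesis using \<open>aji > 0\<close> by simp
    qed
    then have "qij = uj * qji / ui" using \<open>ui > 0\<close> by (simp add: eq_divide_eq mult.commute)
    then show ?thesis using 1 \<open>ui > 0\<close> by (simp add: field_simps)
  next
    case 2
    have "uj > 0" using pair_prob_pos_if_absent 2 .
    have "ui = 0" using pair_balance pair_irreducible 2 by auto
    then show ?thesis using 2 \<open>uj > 0\<close> by (simp add: field_simps)
  next
    case 3
    then have "qij = 0" using menu_balance by simp
    then show ?thesis using 3 by simp
  qed
qed

end

lemma stationary_iff_net_flow:
  assumes "finite M" and diag: "\<forall>j\<in>M. Q M j j = 1 - (\<Sum>k\<in>M - {j}. Q M j k)"
  shows "stationary p Q M \<longleftrightarrow>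
           (\<forall>j\<in>M. (\<Sum>i\<in>M - {j}. p j M * Q M j i - p i M * Q M i j) = 0)"
proof -
  have "(\<Sum>i\<in>M. p i M * ((if i = j then 1 else 0) - Q M i j))
      = (\<Sum>i\<in>M - {j}. p j M * Q M j i - p i M * Q M i j)" if "j \<in> M" for j
  proof -
    have "(\<Sum>i\<in>M. p i M * ((if i = j then 1 else 0) - Q M i j))
        = p j M * (1 - Q M j j) - (\<Sum>i\<in>M - {j}. p i M * Q M i j)"
      using sum.remove[OF \<open>finite M\<close> \<open>j \<in> M\<close>,
          of "\<lambda>i. p i M * ((if i = j then 1 else 0) - Q M i j)"]
      by (simp add: sum_negf[symmetric])
    also have "\<dots> = p j M * (\<Sum>k\<in>M - {j}. Q M j k) - (\<Sum>i\<in>M - {j}. p i M * Q M i j)"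
      using diag \<open>j \<in> M\<close> by simp
    also have "\<dots> = (\<Sum>i\<in>M - {j}. p j M * Q M j i - p i M * Q M i j)"
      by (simp add: sum_subtractf sum_distrib_left)
    finally show ?thesis .
  qed
  then show ?thesis unfolding stationary_def by simp
qed

lemma stationary_pair_balance:
  assumes "stationary p Q {i, j}" "i \<noteq> j"
    and "Q {i, j} i i = 1 - Q {i, j} i j" "Q {i, j} j j = 1 - Q {i, j} j i"
  shows "p i {i, j} * Q {i, j} i j = p j {i, j} * Q {i, j} j i"
proof -
  have pair_minus: "{i, j} - {j} = {i}" "{i, j} - {i} = {j}" using \<open>i \<noteq> j\<close> by auto
  then have "\<forall>k\<in>{i, j}. Q {i, j} k k = 1 - (\<Sum>l\<in>{i, j} - {k}. Q {i, j} k l)"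
    using assms(3,4) by simp
  then have "\<forall>k\<in>{i, j}. (\<Sum>l\<in>{i, j} - {k}. p k {i, j} * Q {i, j} k l - p l {i, j} * Q {i, j} l k) = 0"
    using assms(1) stationary_iff_net_flow[of "{i, j}" Q p] by blast
  then have "(\<Sum>l\<in>{i, j} - {j}. p j {i, j} * Q {i, j} j l - p l {i, j} * Q {i, j} l j) = 0"
    by blast
  then show ?thesis unfolding pair_minus by simp
qed

lemma Q_familyD:
  assumes "Q_family X Q" "menu X M"
  shows "\<forall>i\<in>M. \<forall>j\<in>M. 0 \<le> Q M i j"
    and "\<forall>j\<in>M. Q M j j = 1 - (\<Sum>k\<in>M - {j}. Q M j k)"
    and "\<forall>i\<in>M. \<forall>j\<in>M. i \<noteq> j \<longrightarrow> Q {i, j} i j = 0 \<longrightarrow> Q {i, j} j i > 0"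
    and "\<forall>i\<in>M. \<forall>j\<in>M. i \<noteq> j \<longrightarrow> Q {i, j} i j * Q M j i = Q {i, j} j i * Q M i j"
  using assms unfolding Q_family_def by blast+

lemma binary_choice:
  assumes "stoch_choice X p" "i \<in> X" "j \<in> X" "i \<noteq> j"
  shows "p i {i, j} + p j {i, j} = 1" "0 \<le> p i {i, j}" "0 \<le> p j {i, j}"
proof -
  have "menu X {i, j}" using assms(2,3) by (auto simp: menu_def)
  then have "(\<Sum>k\<in>{i, j}. p k {i, j}) = 1" "\<forall>k\<in>X. 0 \<le> p k {i, j}"
    using assms(1) unfolding stoch_choice_def by blast+
  then show "p i {i, j} + p j {i, j} = 1" "0 \<le> p i {i, j}" "0 \<le> p j {i, j}"
    using assms(2-4) by simp_all
qed

context
  fixes X :: "'a set" and p :: "'a \<Rightarrow> 'a set \<Rightarrow> real"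
    and Q :: "'a set \<Rightarrow> 'a \<Rightarrow> 'a \<Rightarrow> real" and M :: "'a set"
  assumes Q: "Q_family X Q"
    and p: "stoch_choice X p"
    and pairs_stationary: "\<And>i j. i \<in> X \<Longrightarrow> j \<in> X \<Longrightarrow> i \<noteq> j \<Longrightarrow> stationary p Q {i, j}"
    and M: "menu X M"
begin

lemma menu_pair_hypotheses:
  assumes "j \<in> M" "i \<in> M - {j}"
  shows "p i {i, j} + p j {i, j} = 1"
    and "p i {i, j} * Q {i, j} i j = p j {i, j} * Q {i, j} j i"
    and "0 \<le> p i {i, j}" "0 \<le> p j {i, j}" "0 \<le> Q {i, j} i j" "0 \<le> Q {i, j} j i" "0 \<le> Q M j i"
    and "Q {i, j} i j = 0 \<longrightarrow> Q {i, j} j i > 0"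
    and "Q {i, j} i j * Q M j i = Q {i, j} j i * Q M i j"
proof -
  have "i \<in> M" "i \<noteq> j" using assms(2) by simp_all
  then have "i \<in> X" "j \<in> X" using assms(1) M unfolding menu_def by blast+
  then have pair: "menu X {i, j}" by (auto simp: menu_def)
  show "p i {i, j} + p j {i, j} = 1" "0 \<le> p i {i, j}" "0 \<le> p j {i, j}"
    using binary_choice[OF p \<open>i \<in> X\<close> \<open>j \<in> X\<close> \<open>i \<noteq> j\<close>] by auto
  have "\<forall>k\<in>{i, j}. Q {i, j} k k = 1 - (\<Sum>l\<in>{i, j} - {k}. Q {i, j} k l)"
    using Q_familyD(2)[OF Q pair] .
  moreover have "{i, j} - {i} = {j}" "{i, j} - {j} = {i}" using \<open>i \<noteq> j\<close> by auto
  ultimately have "Q {i, j} i i = 1 - Q {i, j} i j" "Q {i, j} j j = 1 - Q {i, j} j i"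
    by simp_all
  then show "p i {i, j} * Q {i, j} i j = p j {i, j} * Q {i, j} j i"
    by (rule stationary_pair_balance[OF pairs_stationary[OF \<open>i \<in> X\<close> \<open>j \<in> X\<close> \<open>i \<noteq> j\<close>]
          \<open>i \<noteq> j\<close>])
  show "0 \<le> Q {i, j} i j" "0 \<le> Q {i, j} j i"
    using Q_familyD(1)[OF Q pair] by simp_all
  show "0 \<le> Q M j i" "Q {i, j} i j = 0 \<longrightarrow> Q {i, j} j i > 0"
    "Q {i, j} i j * Q M j i = Q {i, j} j i * Q M i j"
    using Q_familyD(1,3,4)[OF Q M] \<open>i \<in> M\<close> \<open>j \<in> M\<close> \<open>i \<noteq> j\<close> by blast+
qed

lemma net_flow_sum_eq_delta_sums:
  assumes "finite M" "j \<in> M"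
  shows "(\<Sum>i\<in>M - {j}. p j M * Q M j i - p i M * Q M i j) =
      (\<Sum>i\<in>{i \<in> M - {j}. Q M j i > 0}. delta p M j i * Q M j i / p i {i, j})
    - (\<Sum>i\<in>{i \<in> M - {j}. Q M j i = 0 \<and> Q {i, j} j i = 0}.
         delta p M i j * Q M i j / p j {i, j})"
proof -
  have "(\<Sum>i\<in>M - {j}. p j M * Q M j i - p i M * Q M i j) =
    (\<Sum>i\<in>M - {j}. (if Q M j i > 0 then delta p M j i * Q M j i / p i {i, j} else 0)
      - (if Q M j i = 0 \<and> Q {i, j} j i = 0 then delta p M i j * Q M i j / p j {i, j} else 0))"
  proof (rule sum.cong[OF refl])
    fix i assume "i \<in> M - {j}"
    show "p j M * Q M j i - p i M * Q M i j =
        (if Q M j i > 0 then delta p M j i * Q M j i / p i {i, j} else 0)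
      - (if Q M j i = 0 \<and> Q {i, j} j i = 0 then delta p M i j * Q M i j / p j {i, j} else 0)"
      using net_flow_eq_delta_terms[OF menu_pair_hypotheses[OF \<open>j \<in> M\<close> \<open>i \<in> M - {j}\<close>],
          of "p j M" "p i M"]
      unfolding delta_def insert_commute[of j i "{}"] by simp
  qed
  then show ?thesis
    using \<open>finite M\<close> by (simp only: sum_subtractf sum.inter_filter finite_Diff)
qed

end

theorem lemmaA3:
  fixes X :: "'a set" and p :: "'a \<Rightarrow> 'a set \<Rightarrow> real"
    and Q :: "'a set \<Rightarrow> 'a \<Rightarrow> 'a \<Rightarrow> real" and M :: "'a set"
  assumes "finite X"
    and "Q_family X Q"
    and "stoch_choice X p"
    and "\<And>i j. i \<in> X \<Longrightarrow> j \<in> X \<Longrightarrow> i \<noteq> j \<Longrightarrow> stationary p Q {i, j}"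
    and "menu X M"
  shows "(stationary p Q M \<longleftrightarrow>
           (\<forall>j\<in>M.
              (\<Sum>i\<in>{i \<in> M - {j}. Q M j i > 0}. delta p M j i * Q M j i / p i {i, j})
            - (\<Sum>i\<in>{i \<in> M - {j}. Q M j i = 0 \<and> Q {i, j} j i = 0}.
                   delta p M i j * Q M i j / p j {i, j}) = 0))
       \<and> (\<forall>j\<in>M. \<forall>i\<in>M - {j}.
              (Q M j i > 0 \<longrightarrow> p i {i, j} > 0)
            \<and> (Q M j i = 0 \<and> Q {i, j} j i = 0 \<longrightarrow> p j {i, j} > 0))"
proof -
  have fin: "finite M" using assms(1,5) finite_subset unfolding menu_def by auto
  note pair = menu_pair_hypotheses[OF assms(2-5)]
  have "stationary p Q M \<longleftrightarrow>
      (\<forall>j\<in>M. (\<Sum>i\<in>{i \<in> M - {j}. Q M j i > 0}. delta p M j i * Q M j i / p i {i, j})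
        - (\<Sum>i\<in>{i \<in> M - {j}. Q M j i = 0 \<and> Q {i, j} j i = 0}.
             delta p M i j * Q M i j / p j {i, j}) = 0)"
    using stationary_iff_net_flow[of M Q p, OF fin Q_familyD(2)[OF assms(2,5)]]
      net_flow_sum_eq_delta_sums[OF assms(2-5) fin] by simp
  moreover have "\<forall>j\<in>M. \<forall>i\<in>M - {j}. (Q M j i > 0 \<longrightarrow> p i {i, j} > 0)
      \<and> (Q M j i = 0 \<and> Q {i, j} j i = 0 \<longrightarrow> p j {i, j} > 0)"
    using pair_prob_pos_if_menu_pos[OF pair] pair_prob_pos_if_absent[OF pair] by blast
  ultimately show ?thesis by blast
qed

end
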